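(* Let $R$ be an s-unital ring and let $(P,Q,\psi)$ be an s-unital $R$-system. Suppose that $(S,T,\sigma,B)$ is a semi-full covariant representation of $(P,Q,\psi)$, that $(P,Q,\psi)$ satisfies Condition (FS), and that the ideal $I^{(k)}_{\psi,\sigma}$ of $B_0$ is s-unital for every $k\ge0$. Then $B$ is nearly epsilon-strongly $\mathbb{Z}$-graded.
   Context: Rings are associative, not necessarily unital; for additive subsets $X,Y$ of a ring, $XY$ is the additive subgroup generated by products $xy$. For rings $A,B$, an $A$-$B$-bimodule $M$ is s-unital if for every $x\in M$ there are $a\in A,b\in B$ with $ax=x=xb$. A ring $R$ is s-unital if it is s-unital as an $R$-$R$-bimodule; an ideal is s-unital if it is s-unital as a ring. A $\mathbb{Z}$-graded ring $B=\bigoplus_iB_i$ is nearly epsilon-strongly graded if each $B_i$ is an s-unital $B_iB_{-i}$-$B_{-i}B_i$-bimodule. An $R$-system is a triple $(P,Q,\psi)$ with $P,Q$ $R$-bimodules and $\psi:P\otimes_RQ\to R$ an $R$-bimodule homomorphism; it is s-unital if $R$ is s-unital and $P,Q$ are s-unital $R$-$R$-bimodules. Put $P^{\otimes0}=Q^{\otimes0}=R$, $\psi_0(r\otimes r')=rr'$, $\psi_1=\psi$, and for $n>1$: $Q^{\otimes n}=Q^{\otimes(n-1)}\otimes_RQ$, $P^{\otimes n}=P\otimes_RP^{\otimes(n-1)}$, $\psi_n((p_1\otimes p_2)\otimes(q_2\otimes q_1))=\psi(p_1\psi_{n-1}(p_2\otimes q_2)\otimes q_1)$. A covariant representation is a tuple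 $(S,T,\sigma,B)$ with $B$ a ring, $S:P\to B$, $T:Q\to B$ additive maps, $\sigma:R\to B$ a ring homomorphism, with $S(pr)=S(p)\sigma(r)$, $S(rp)=\sigma(r)S(p)$, $T(qr)=T(q)\sigma(r)$, $T(rq)=\sigma(r)T(q)$, $\sigma(\psi(p\otimes q))=S(p)T(q)$. It is graded if $B$ is generated as a ring by $\sigma(R)\cup S(P)\cup T(Q)$ and $B$ carries a $\mathbb{Z}$-grading with $\sigma(R)\subseteq B_0$, $T(Q)\subseteq B_1$, $S(P)\subseteq B_{-1}$. For a graded covariant representation and $k\ge0$, $I^{(k)}_{\psi,\sigma}$ is the ideal of $B_0$ generated by $\{\sigma(\psi_k(p\otimes q)):p\in P^{\otimes k},q\in Q^{\otimes k}\}$; the (graded) representation is semi-full if $B_{-k}B_k=I^{(k)}_{\psi,\sigma}$ for all $k\ge0$. For $q\in Q,p\in P$ let $\theta_{q,p}(x)=q\psi(p\otimes x)$ ($x\in Q$) and $\theta_{p,q}(y)=\psi(y\otimes q)p$ ($y\in P$); $\mathcal{F}_P(Q)$, $\mathcal{F}_Q(P)$ are the additive groups generated by these maps. Condition (FS): for all finite sets $\{q_i\}\subseteq Q$, $\{p_j\}\subseteq P$ there are $\Theta\in\mathcal{F}_P(Q)$, $\Phi\in\mathcal{F}_Q(P)$ with $\Theta(q_i)=q_i$, $\Phi(p_j)=p_j$. *)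

theory Defs
  imports Main
begin

(* Rings: Isabelle's type class ring is associative and NOT necessarily unital. *)

inductive_set addgen :: "'a::ab_group_add set \<Rightarrow> 'a set" for X where
  gen: "x \<in> X \<Longrightarrow> x \<in> addgen X"
| zero: "0 \<in> addgen X"
| add: "x \<in> addgen X \<Longrightarrow> y \<in> addgen X \<Longrightarrow> x + y \<in> addgen X"
| neg: "x \<in> addgen X \<Longrightarrow> - x \<in> addgen X"

inductive_set fungen :: "('a \<Rightarrow> 'a::ab_group_add) set \<Rightarrow> ('a \<Rightarrow> 'a) set" for G where
  gen: "f \<in> G \<Longrightarrow> f \<in> fungen G"
| zero: "(\<lambda>x. 0) \<in> fungen G"
| add: "f \<in> fungen G \<Longrightarrow> g \<in> fungen G \<Longrightarrow> (\<lambda>x. f x + g x) \<in> fungen G"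
| neg: "f \<in> fungen G \<Longrightarrow> (\<lambda>x. - f x) \<in> fungen G"

definition setmul :: "'a::ring set \<Rightarrow> 'a set \<Rightarrow> 'a set" where
  "setmul X Y = addgen {x * y | x y. x \<in> X \<and> y \<in> Y}"

inductive_set subring_gen :: "'a::ring set \<Rightarrow> 'a set" for X where
  gen: "x \<in> X \<Longrightarrow> x \<in> subring_gen X"
| zero: "0 \<in> subring_gen X"
| add: "x \<in> subring_gen X \<Longrightarrow> y \<in> subring_gen X \<Longrightarrow> x + y \<in> subring_gen X"
| neg: "x \<in> subring_gen X \<Longrightarrow> - x \<in> subring_gen X"
| mul: "x \<in> subring_gen X \<Longrightarrow> y \<in> subring_gen X \<Longrightarrow> x * y \<in> subring_gen X"

definition additive :: "('a::ab_group_add \<Rightarrow> 'b::ab_group_add) \<Rightarrow> bool" where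
  "additive f \<longleftrightarrow> (\<forall>x y. f (x + y) = f x + f y)"

definition ring_hom_nu :: "('a::ring \<Rightarrow> 'b::ring) \<Rightarrow> bool" where
  "ring_hom_nu f \<longleftrightarrow> additive f \<and> (\<forall>x y. f (x * y) = f x * f y)"

definition s_unital_ring :: "'a::ring itself \<Rightarrow> bool" where
  "s_unital_ring _ \<longleftrightarrow> (\<forall>x::'a. \<exists>a b. a * x = x \<and> x * b = x)"

definition bimodule :: "('r::ring \<Rightarrow> 'm::ab_group_add \<Rightarrow> 'm) \<Rightarrow> ('m \<Rightarrow> 'r \<Rightarrow> 'm) \<Rightarrow> bool" where
  "bimodule la ra \<longleftrightarrow>
     (\<forall>r x y. la r (x + y) = la r x + la r y) \<and>
     (\<forall>r s x. la (r + s) x = la r x + la s x) \<and>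
     (\<forall>r s x. la (r * s) x = la r (la s x)) \<and>
     (\<forall>r x y. ra (x + y) r = ra x r + ra y r) \<and>
     (\<forall>r s x. ra x (r + s) = ra x r + ra x s) \<and>
     (\<forall>r s x. ra x (r * s) = ra (ra x r) s) \<and>
     (\<forall>r s x. ra (la r x) s = la r (ra x s))"

definition s_unital_bimodule :: "('r::ring \<Rightarrow> 'm::ab_group_add \<Rightarrow> 'm) \<Rightarrow> ('m \<Rightarrow> 'r \<Rightarrow> 'm) \<Rightarrow> bool" where
  "s_unital_bimodule la ra \<longleftrightarrow> (\<forall>x. \<exists>a b. la a x = x \<and> ra x b = x)"

(* An R-bimodule homomorphism psi : P \<otimes>_R Q \<rightarrow> R, given (by the universal property of
   the tensor product) as an R-balanced biadditive map P \<times> Q \<rightarrow> R that is compatible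
   with the outer bimodule actions. *)
definition system_map ::
  "('r::ring \<Rightarrow> 'p::ab_group_add \<Rightarrow> 'p) \<Rightarrow> ('p \<Rightarrow> 'r \<Rightarrow> 'p) \<Rightarrow>
   ('r \<Rightarrow> 'q::ab_group_add \<Rightarrow> 'q) \<Rightarrow> ('q \<Rightarrow> 'r \<Rightarrow> 'q) \<Rightarrow> ('p \<Rightarrow> 'q \<Rightarrow> 'r) \<Rightarrow> bool" where
  "system_map lP rP lQ rQ psi \<longleftrightarrow>
     (\<forall>p p' q. psi (p + p') q = psi p q + psi p' q) \<and>
     (\<forall>p q q'. psi p (q + q') = psi p q + psi p q') \<and>
     (\<forall>p r q. psi (rP p r) q = psi p (lQ r q)) \<and>
     (\<forall>r p q. psi (lP r p) q = r * psi p q) \<and>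
     (\<forall>p q r. psi p (rQ q r) = psi p q * r)"

definition R_system ::
  "('r::ring \<Rightarrow> 'p::ab_group_add \<Rightarrow> 'p) \<Rightarrow> ('p \<Rightarrow> 'r \<Rightarrow> 'p) \<Rightarrow>
   ('r \<Rightarrow> 'q::ab_group_add \<Rightarrow> 'q) \<Rightarrow> ('q \<Rightarrow> 'r \<Rightarrow> 'q) \<Rightarrow> ('p \<Rightarrow> 'q \<Rightarrow> 'r) \<Rightarrow> bool" where
  "R_system lP rP lQ rQ psi \<longleftrightarrow> bimodule lP rP \<and> bimodule lQ rQ \<and> system_map lP rP lQ rQ psi"

definition s_unital_R_system ::
  "('r::ring \<Rightarrow> 'p::ab_group_add \<Rightarrow> 'p) \<Rightarrow> ('p \<Rightarrow> 'r \<Rightarrow> 'p) \<Rightarrow>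
   ('r \<Rightarrow> 'q::ab_group_add \<Rightarrow> 'q) \<Rightarrow> ('q \<Rightarrow> 'r \<Rightarrow> 'q) \<Rightarrow> ('p \<Rightarrow> 'q \<Rightarrow> 'r) \<Rightarrow> bool" where
  "s_unital_R_system lP rP lQ rQ psi \<longleftrightarrow>
     R_system lP rP lQ rQ psi \<and> s_unital_ring TYPE('r) \<and>
     s_unital_bimodule lP rP \<and> s_unital_bimodule lQ rQ"

(* psi_n on simple tensors, n \<ge> 1.  The list [p1,...,pn] stands for
   p1 \<otimes> (p2 \<otimes> ... \<otimes> pn) \<in> P^{\<otimes>n} and the list [q1,...,qn] stands for
   ((qn \<otimes> ...) \<otimes> q2) \<otimes> q1 \<in> Q^{\<otimes>n}, so that
   psi_n((p1 \<otimes> p') \<otimes> (q' \<otimes> q1)) = psi(p1 psi_{n-1}(p' \<otimes> q') \<otimes> q1). *)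
fun psiL :: "('p \<Rightarrow> 'r \<Rightarrow> 'p) \<Rightarrow> ('p \<Rightarrow> 'q \<Rightarrow> 'r) \<Rightarrow> 'p list \<Rightarrow> 'q list \<Rightarrow> 'r" where
  "psiL rP psi [p] [q] = psi p q"
| "psiL rP psi (p # p2 # ps) (q # q2 # qs) = psi (rP p (psiL rP psi (p2 # ps) (q2 # qs))) q"

(* generators sigma(psi_k(p \<otimes> q)) of I^{(k)}; since sigma \<circ> psi_k is additive it suffices
   to take simple tensors p, q.  For k = 0, psi_0(r \<otimes> r') = r r'. *)
definition psi_gens ::
  "('r::ring \<Rightarrow> 'b::ring) \<Rightarrow> ('p \<Rightarrow> 'r \<Rightarrow> 'p) \<Rightarrow> ('p \<Rightarrow> 'q \<Rightarrow> 'r) \<Rightarrow> nat \<Rightarrow> 'b set" where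
  "psi_gens sigma rP psi k =
     (if k = 0 then {sigma (r * r') | r r'. True}
      else {sigma (psiL rP psi ps qs) | ps qs. length ps = k \<and> length qs = k})"

definition ideal_in :: "'b::ring set \<Rightarrow> 'b set \<Rightarrow> bool" where
  "ideal_in B0 I \<longleftrightarrow> I \<subseteq> B0 \<and> 0 \<in> I \<and> (\<forall>x\<in>I. \<forall>y\<in>I. x + y \<in> I) \<and> (\<forall>x\<in>I. - x \<in> I) \<and>
     (\<forall>b\<in>B0. \<forall>x\<in>I. b * x \<in> I \<and> x * b \<in> I)"

definition ideal_gen :: "'b::ring set \<Rightarrow> 'b set \<Rightarrow> 'b set" where
  "ideal_gen B0 X = \<Inter>{I. ideal_in B0 I \<and> X \<subseteq> I}"

definition I_k ::
  "(int \<Rightarrow> 'b::ring set) \<Rightarrow> ('r::ring \<Rightarrow> 'b) \<Rightarrow> ('p \<Rightarrow> 'r \<Rightarrow> 'p) \<Rightarrow> ('p \<Rightarrow> 'q \<Rightarrow> 'r) \<Rightarrow> nat \<Rightarrow> 'b set"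
  where "I_k Bi sigma rP psi k = ideal_gen (Bi 0) (psi_gens sigma rP psi k)"

definition s_unital_set :: "'b::ring set \<Rightarrow> bool" where
  "s_unital_set I \<longleftrightarrow> (\<forall>x\<in>I. \<exists>a\<in>I. \<exists>b\<in>I. a * x = x \<and> x * b = x)"

definition Z_grading :: "(int \<Rightarrow> 'b::ring set) \<Rightarrow> bool" where
  "Z_grading Bi \<longleftrightarrow>
     (\<forall>i. 0 \<in> Bi i \<and> (\<forall>x\<in>Bi i. \<forall>y\<in>Bi i. x + y \<in> Bi i) \<and> (\<forall>x\<in>Bi i. - x \<in> Bi i)) \<and>
     (\<forall>i j. \<forall>x\<in>Bi i. \<forall>y\<in>Bi j. x * y \<in> Bi (i + j)) \<and>
     (\<forall>b. \<exists>!f. (\<forall>i. f i \<in> Bi i) \<and> finite {i. f i \<noteq> 0} \<and> b = sum f {i. f i \<noteq> 0})"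

definition covariant_rep ::
  "('r::ring \<Rightarrow> 'p::ab_group_add \<Rightarrow> 'p) \<Rightarrow> ('p \<Rightarrow> 'r \<Rightarrow> 'p) \<Rightarrow>
   ('r \<Rightarrow> 'q::ab_group_add \<Rightarrow> 'q) \<Rightarrow> ('q \<Rightarrow> 'r \<Rightarrow> 'q) \<Rightarrow> ('p \<Rightarrow> 'q \<Rightarrow> 'r) \<Rightarrow>
   ('p \<Rightarrow> 'b::ring) \<Rightarrow> ('q \<Rightarrow> 'b) \<Rightarrow> ('r \<Rightarrow> 'b) \<Rightarrow> bool" where
  "covariant_rep lP rP lQ rQ psi S T sigma \<longleftrightarrow>
     additive S \<and> additive T \<and> ring_hom_nu sigma \<and>
     (\<forall>p r. S (rP p r) = S p * sigma r) \<and> (\<forall>r p. S (lP r p) = sigma r * S p) \<and>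
     (\<forall>q r. T (rQ q r) = T q * sigma r) \<and> (\<forall>r q. T (lQ r q) = sigma r * T q) \<and>
     (\<forall>p q. sigma (psi p q) = S p * T q)"

definition graded_cov_rep ::
  "('r::ring \<Rightarrow> 'p::ab_group_add \<Rightarrow> 'p) \<Rightarrow> ('p \<Rightarrow> 'r \<Rightarrow> 'p) \<Rightarrow>
   ('r \<Rightarrow> 'q::ab_group_add \<Rightarrow> 'q) \<Rightarrow> ('q \<Rightarrow> 'r \<Rightarrow> 'q) \<Rightarrow> ('p \<Rightarrow> 'q \<Rightarrow> 'r) \<Rightarrow>
   ('p \<Rightarrow> 'b::ring) \<Rightarrow> ('q \<Rightarrow> 'b) \<Rightarrow> ('r \<Rightarrow> 'b) \<Rightarrow> (int \<Rightarrow> 'b set) \<Rightarrow> bool" where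
  "graded_cov_rep lP rP lQ rQ psi S T sigma Bi \<longleftrightarrow>
     covariant_rep lP rP lQ rQ psi S T sigma \<and>
     subring_gen (range sigma \<union> range S \<union> range T) = UNIV \<and>
     Z_grading Bi \<and> range sigma \<subseteq> Bi 0 \<and> range T \<subseteq> Bi 1 \<and> range S \<subseteq> Bi (-1)"

definition semi_full ::
  "('r::ring \<Rightarrow> 'p::ab_group_add \<Rightarrow> 'p) \<Rightarrow> ('p \<Rightarrow> 'r \<Rightarrow> 'p) \<Rightarrow>
   ('r \<Rightarrow> 'q::ab_group_add \<Rightarrow> 'q) \<Rightarrow> ('q \<Rightarrow> 'r \<Rightarrow> 'q) \<Rightarrow> ('p \<Rightarrow> 'q \<Rightarrow> 'r) \<Rightarrow>
   ('p \<Rightarrow> 'b::ring) \<Rightarrow> ('q \<Rightarrow> 'b) \<Rightarrow> ('r \<Rightarrow> 'b) \<Rightarrow> (int \<Rightarrow> 'b set) \<Rightarrow> bool" where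
  "semi_full lP rP lQ rQ psi S T sigma Bi \<longleftrightarrow>
     graded_cov_rep lP rP lQ rQ psi S T sigma Bi \<and>
     (\<forall>k::nat. setmul (Bi (- int k)) (Bi (int k)) = I_k Bi sigma rP psi k)"

definition F_P_Q :: "('q \<Rightarrow> 'r \<Rightarrow> 'q::ab_group_add) \<Rightarrow> ('p \<Rightarrow> 'q \<Rightarrow> 'r) \<Rightarrow> ('q \<Rightarrow> 'q) set" where
  "F_P_Q rQ psi = fungen {(\<lambda>x. rQ q (psi p x)) | q p. True}"

definition F_Q_P :: "('r \<Rightarrow> 'p::ab_group_add \<Rightarrow> 'p) \<Rightarrow> ('p \<Rightarrow> 'q \<Rightarrow> 'r) \<Rightarrow> ('p \<Rightarrow> 'p) set" where
  "F_Q_P lP psi = fungen {(\<lambda>y. lP (psi y q) p) | p q. True}"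

definition condition_FS ::
  "('r \<Rightarrow> 'p::ab_group_add \<Rightarrow> 'p) \<Rightarrow> ('q \<Rightarrow> 'r \<Rightarrow> 'q::ab_group_add) \<Rightarrow> ('p \<Rightarrow> 'q \<Rightarrow> 'r) \<Rightarrow> bool" where
  "condition_FS lP rQ psi \<longleftrightarrow>
     (\<forall>Qs Ps. finite Qs \<and> finite Ps \<longrightarrow>
        (\<exists>\<Theta>\<in>F_P_Q rQ psi. \<exists>\<Phi>\<in>F_Q_P lP psi. (\<forall>q\<in>Qs. \<Theta> q = q) \<and> (\<forall>p\<in>Ps. \<Phi> p = p)))"

(* B_i is an s-unital B_iB_{-i}-B_{-i}B_i-bimodule for every i *)
definition nearly_epsilon_strongly_graded :: "(int \<Rightarrow> 'b::ring set) \<Rightarrow> bool" where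
  "nearly_epsilon_strongly_graded Bi \<longleftrightarrow> Z_grading Bi \<and>
     (\<forall>i. \<forall>x\<in>Bi i. (\<exists>a\<in>setmul (Bi i) (Bi (- i)). a * x = x) \<and>
                    (\<exists>b\<in>setmul (Bi (- i)) (Bi i). x * b = x))"

end

theory Submission
  imports Defs "HOL-Library.Groups_Big_Fun"
begin

text \<open>Every homogeneous element of degree \<open>k > 0\<close> is a sum of monomials that begin with \<open>k\<close>
  factors \<open>T q\<close>. Condition (FS) gives an element \<open>a = \<Sum> T q\<^sub>j S p\<^sub>j\<close> of \<open>B\<^sub>1B\<^sub>-\<^sub>1\<close> that fixes
  finitely many prescribed \<open>T q\<close> from the left; since \<open>S p\<^sub>j T q\<close> is absorbed into the following
  \<open>T\<close>-factor, induction on \<open>k\<close> turns this into a common left unit in \<open>B\<^sub>kB\<^sub>-\<^sub>k\<close> for finitely many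
  such monomials. A right unit in \<open>B\<^sub>-\<^sub>kB\<^sub>k = I(k)\<close> then comes from the s-unitality of
  \<open>I(k)\<close> by Tominaga's common-unit argument. Negative degrees are symmetric, and in degree \<open>0\<close>
  every monomial is fixed by some \<open>\<sigma>(e)\<close>, so \<open>B\<^sub>0 = B\<^sub>0B\<^sub>0 = I(0)\<close>.\<close>

section \<open>Additive subgroups and products of subsets\<close>

definition add_subgroup :: "'a::ab_group_add set \<Rightarrow> bool" where
  "add_subgroup C \<longleftrightarrow> 0 \<in> C \<and> (\<forall>x\<in>C. \<forall>y\<in>C. x + y \<in> C) \<and> (\<forall>x\<in>C. - x \<in> C)"

lemma add_subgroupI:
  assumes "0 \<in> C" "\<And>x y. x \<in> C \<Longrightarrow> y \<in> C \<Longrightarrow> x + y \<in> C" "\<And>x. x \<in> C \<Longrightarrow> - x \<in> C"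
  shows "add_subgroup C"
  using assms unfolding add_subgroup_def by blast

lemma
  assumes "add_subgroup C"
  shows add_subgroup_zero: "0 \<in> C"
    and add_subgroup_add: "x \<in> C \<Longrightarrow> y \<in> C \<Longrightarrow> x + y \<in> C"
    and add_subgroup_neg: "x \<in> C \<Longrightarrow> - x \<in> C"
  using assms unfolding add_subgroup_def by blast+

lemma additive_zero_neg:
  fixes f :: "'a::ab_group_add \<Rightarrow> 'b::ab_group_add"
  assumes add: "\<And>x y. f (x + y) = f x + f y"
  shows "f 0 = 0" and "f (- x) = - f x"
proof -
  show f0: "f 0 = 0" using add[of 0 0] by simp
  have "f (- x) + f x = 0" using add[of "- x" x] f0 by simp
  then show "f (- x) = - f x" by (simp add: eq_neg_iff_add_eq_0)
qed

lemma add_subgroup_vimage: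
  assumes "add_subgroup C" and add: "\<And>x y. f (x + y) = f x + f y"
  shows "add_subgroup (f -` C)"
  using assms additive_zero_neg[OF add]
  by (intro add_subgroupI) (auto intro: add_subgroup_zero add_subgroup_add add_subgroup_neg)

lemma add_subgroup_left_fixed: "add_subgroup {x::'a::ring. a * x = x}"
  by (rule add_subgroupI) (auto simp: distrib_left)

lemma add_subgroup_right_fixed: "add_subgroup {x::'a::ring. x * a = x}"
  by (rule add_subgroupI) (auto simp: distrib_right)

lemma add_subgroup_left_mult_agree:
  assumes "add_subgroup E"
  shows "add_subgroup {z::'a::ring. \<exists>e\<in>E. \<forall>x\<in>F. e * x = z * x}"
proof (rule add_subgroupI)
  show "0 \<in> {z. \<exists>e\<in>E. \<forall>x\<in>F. e * x = z * x}" using add_subgroup_zero[OF assms] by force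
  show "z + z' \<in> {z. \<exists>e\<in>E. \<forall>x\<in>F. e * x = z * x}"
    if z: "z \<in> {z. \<exists>e\<in>E. \<forall>x\<in>F. e * x = z * x}" and z': "z' \<in> {z. \<exists>e\<in>E. \<forall>x\<in>F. e * x = z * x}" for z z'
  proof -
    obtain e where "e \<in> E" "\<forall>x\<in>F. e * x = z * x" using z by blast
    moreover obtain e' where "e' \<in> E" "\<forall>x\<in>F. e' * x = z' * x" using z' by blast
    ultimately show ?thesis
      by (intro CollectI bexI[of _ "e + e'"]) (auto simp: distrib_right add_subgroup_add[OF assms])
  qed
  show "- z \<in> {z. \<exists>e\<in>E. \<forall>x\<in>F. e * x = z * x}" if z: "z \<in> {z. \<exists>e\<in>E. \<forall>x\<in>F. e * x = z * x}" for z
  proof -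
    obtain e where "e \<in> E" "\<forall>x\<in>F. e * x = z * x" using z by blast
    then show ?thesis by (intro CollectI bexI[of _ "- e"]) (auto simp: add_subgroup_neg[OF assms])
  qed
qed

lemma add_subgroup_right_mult_agree:
  assumes "add_subgroup E"
  shows "add_subgroup {z::'a::ring. \<exists>e\<in>E. \<forall>x\<in>F. x * e = x * z}"
proof (rule add_subgroupI)
  show "0 \<in> {z. \<exists>e\<in>E. \<forall>x\<in>F. x * e = x * z}" using add_subgroup_zero[OF assms] by force
  show "z + z' \<in> {z. \<exists>e\<in>E. \<forall>x\<in>F. x * e = x * z}"
    if z: "z \<in> {z. \<exists>e\<in>E. \<forall>x\<in>F. x * e = x * z}" and z': "z' \<in> {z. \<exists>e\<in>E. \<forall>x\<in>F. x * e = x * z}" for z z'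
  proof -
    obtain e where "e \<in> E" "\<forall>x\<in>F. x * e = x * z" using z by blast
    moreover obtain e' where "e' \<in> E" "\<forall>x\<in>F. x * e' = x * z'" using z' by blast
    ultimately show ?thesis
      by (intro CollectI bexI[of _ "e + e'"]) (auto simp: distrib_left add_subgroup_add[OF assms])
  qed
  show "- z \<in> {z. \<exists>e\<in>E. \<forall>x\<in>F. x * e = x * z}" if z: "z \<in> {z. \<exists>e\<in>E. \<forall>x\<in>F. x * e = x * z}" for z
  proof -
    obtain e where "e \<in> E" "\<forall>x\<in>F. x * e = x * z" using z by blast
    then show ?thesis by (intro CollectI bexI[of _ "- e"]) (auto simp: add_subgroup_neg[OF assms])
  qed
qed

lemma add_subgroup_addgen: "add_subgroup (addgen X)"
  by (rule add_subgroupI) (auto intro: addgen.intros)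

lemma addgen_least:
  assumes "add_subgroup C" "X \<subseteq> C"
  shows "addgen X \<subseteq> C"
proof
  fix x assume "x \<in> addgen X"
  then show "x \<in> C"
    by induct (use assms in \<open>auto intro: add_subgroup_zero add_subgroup_add add_subgroup_neg\<close>)
qed

lemma addgen_mono: "X \<subseteq> Y \<Longrightarrow> addgen X \<subseteq> addgen Y"
  by (rule addgen_least[OF add_subgroup_addgen]) (blast intro: addgen.gen)

lemma addgen_finite_support:
  assumes "x \<in> addgen G"
  shows "\<exists>F. finite F \<and> F \<subseteq> G \<and> x \<in> addgen F"
proof -
  let ?C = "{x. \<exists>F. finite F \<and> F \<subseteq> G \<and> x \<in> addgen F}"
  have "add_subgroup ?C"
  proof (rule add_subgroupI)
    show "0 \<in> ?C" by (intro CollectI exI[of _ "{}"]) (simp add: addgen.zero)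
    show "x + y \<in> ?C" if x: "x \<in> ?C" and y: "y \<in> ?C" for x y
    proof -
      obtain F where F: "finite F" "F \<subseteq> G" "x \<in> addgen F" using x by blast
      obtain F' where F': "finite F'" "F' \<subseteq> G" "y \<in> addgen F'" using y by blast
      have "x + y \<in> addgen (F \<union> F')"
        using F(3) F'(3) addgen_mono[of F "F \<union> F'"] addgen_mono[of F' "F \<union> F'"]
        by (intro addgen.add) auto
      then show ?thesis using F F' by (intro CollectI exI[of _ "F \<union> F'"]) simp
    qed
  next
    show "- x \<in> ?C" if "x \<in> ?C" for x
      using that addgen.neg by blast
  qed
  moreover have "G \<subseteq> ?C"
  proof
    fix g assume "g \<in> G"
    then show "g \<in> ?C" by (intro CollectI exI[of _ "{g}"]) (simp add: addgen.gen)
  qed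
  ultimately have "addgen G \<subseteq> ?C" by (rule addgen_least)
  then show ?thesis using assms by blast
qed

lemma addgen_mult_closed:
  assumes X: "\<And>x y. x \<in> X \<Longrightarrow> y \<in> X \<Longrightarrow> x * y \<in> X"
    and a: "a \<in> addgen X" and b: "b \<in> addgen X"
  shows "a * b \<in> addgen (X :: 'a::ring set)"
proof -
  have "x * b \<in> addgen X" if "x \<in> X" for x
  proof -
    have "addgen X \<subseteq> (\<lambda>b. x * b) -` addgen X"
      using X that by (intro addgen_least add_subgroup_vimage[OF add_subgroup_addgen])
        (auto simp: distrib_left intro: addgen.gen)
    then show ?thesis using b by blast
  qed
  then have "addgen X \<subseteq> (\<lambda>a. a * b) -` addgen X"
    by (intro addgen_least add_subgroup_vimage[OF add_subgroup_addgen]) (auto simp: distrib_right)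
  then show ?thesis using a by blast
qed

lemma subring_gen_subset_addgen:
  assumes "G \<subseteq> X" and "\<And>x y. x \<in> X \<Longrightarrow> y \<in> X \<Longrightarrow> x * y \<in> X"
  shows "subring_gen G \<subseteq> addgen X"
proof
  fix x assume "x \<in> subring_gen G"
  then show "x \<in> addgen X"
    by induct (use assms in \<open>auto intro: addgen.intros addgen_mult_closed\<close>)
qed

lemma setmul_in: "x \<in> X \<Longrightarrow> y \<in> Y \<Longrightarrow> x * y \<in> setmul X Y"
  unfolding setmul_def by (blast intro: addgen.gen)

lemma setmul_mono: "X \<subseteq> X' \<Longrightarrow> Y \<subseteq> Y' \<Longrightarrow> setmul X Y \<subseteq> setmul X' Y'"
  unfolding setmul_def by (rule addgen_mono) blast

lemma add_subgroup_setmul: "add_subgroup (setmul X Y)"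
  unfolding setmul_def by (rule add_subgroup_addgen)

lemma setmul_least:
  assumes "add_subgroup C" "\<And>x y. x \<in> X \<Longrightarrow> y \<in> Y \<Longrightarrow> x * y \<in> C"
  shows "setmul X Y \<subseteq> C"
  unfolding setmul_def using assms by (intro addgen_least) auto

lemma setmul_finite:
  assumes "a \<in> setmul X Y"
  shows "\<exists>U V. finite U \<and> U \<subseteq> X \<and> finite V \<and> V \<subseteq> Y \<and> a \<in> setmul U V"
proof -
  obtain F where F: "finite F" "F \<subseteq> {x * y | x y. x \<in> X \<and> y \<in> Y}" "a \<in> addgen F"
    using addgen_finite_support assms unfolding setmul_def by blast
  then have "\<forall>f\<in>F. \<exists>xy. fst xy \<in> X \<and> snd xy \<in> Y \<and> f = fst xy * snd xy" by fastforce
  from bchoice[OF this] obtain c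
    where c: "\<forall>f\<in>F. fst (c f) \<in> X \<and> snd (c f) \<in> Y \<and> f = fst (c f) * snd (c f)"
    by blast
  let ?U = "(fst \<circ> c) ` F" and ?V = "(snd \<circ> c) ` F"
  have "F \<subseteq> {x * y | x y. x \<in> ?U \<and> y \<in> ?V}" using c by force
  then have "a \<in> setmul ?U ?V" using F(3) addgen_mono unfolding setmul_def by blast
  then show ?thesis
    using F(1) c by (intro exI[of _ ?U] exI[of _ ?V]) auto
qed

lemma setmul_finite_left:
  assumes "a \<in> setmul X Y"
  shows "\<exists>U. finite U \<and> U \<subseteq> X \<and> a \<in> setmul U Y"
proof -
  obtain U V where "finite U" "U \<subseteq> X" "V \<subseteq> Y" "a \<in> setmul U V" using setmul_finite[OF assms] by blast
  then show ?thesis using setmul_mono[of U U V Y] by blast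
qed

lemma setmul_finite_right:
  assumes "a \<in> setmul X Y"
  shows "\<exists>V. finite V \<and> V \<subseteq> Y \<and> a \<in> setmul X V"
proof -
  obtain U V where "U \<subseteq> X" "finite V" "V \<subseteq> Y" "a \<in> setmul U V" using setmul_finite[OF assms] by blast
  then show ?thesis using setmul_mono[of U X V V] by blast
qed

lemma setmul_mult_closed:
  assumes YXY: "\<And>y x' y'. y \<in> Y \<Longrightarrow> x' \<in> X \<Longrightarrow> y' \<in> Y \<Longrightarrow> y * x' * y' \<in> Y"
    and a: "a \<in> setmul X Y" and b: "b \<in> setmul X Y"
  shows "a * b \<in> setmul X Y"
proof -
  let ?P = "{x * y | x y. x \<in> X \<and> y \<in> Y}"
  have "p * p' \<in> ?P" if p: "p \<in> ?P" and p': "p' \<in> ?P" for p p'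
  proof -
    obtain x y x' y' where "p = x * y" "p' = x' * y'" "x \<in> X" "y \<in> Y" "x' \<in> X" "y' \<in> Y"
      using p p' by blast
    moreover have "x * y * (x' * y') = x * (y * x' * y')" by (simp add: mult.assoc)
    ultimately show ?thesis using YXY by blast
  qed
  then show ?thesis using a b unfolding setmul_def by (rule addgen_mult_closed)
qed

section \<open>Common units in s-unital rings\<close>

lemma s_unital_set_common_right_unit:
  fixes I :: "'a::ring set"
  assumes su: "s_unital_set I" and I: "add_subgroup I" "\<And>x y. x \<in> I \<Longrightarrow> y \<in> I \<Longrightarrow> x * y \<in> I"
    and "finite F" "F \<subseteq> I"
  shows "\<exists>b\<in>I. \<forall>x\<in>F. x * b = x"
  using \<open>finite F\<close> \<open>F \<subseteq> I\<close>
proof (induction rule: finite_induct)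
  case empty
  then show ?case using add_subgroup_zero[OF I(1)] by blast
next
  case (insert x F)
  then obtain b where b: "b \<in> I" "\<forall>y\<in>F. y * b = y" by auto
  have "x - x * b \<in> I"
    using insert.prems b(1) I unfolding diff_conv_add_uminus
    by (blast intro: add_subgroup_add add_subgroup_neg)
  then obtain c where c: "c \<in> I" "(x - x * b) * c = x - x * b"
    using su unfolding s_unital_set_def by blast
  \<comment> \<open>\<open>d\<close> fixes everything \<open>b\<close> fixes, and fixes \<open>x\<close> because \<open>c\<close> fixes \<open>x - x b\<close>\<close>
  define d where "d = b + c - b * c"
  have "d \<in> I"
    using b(1) c(1) I unfolding d_def diff_conv_add_uminus
    by (blast intro: add_subgroup_add add_subgroup_neg)
  moreover have "y * d = y" if "y \<in> insert x F" for y
  proof -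
    have "y * d = y * b + (y - y * b) * c" unfolding d_def by (simp add: algebra_simps)
    moreover have "y = x \<or> y * b = y" using that b(2) by blast
    ultimately show ?thesis using c(2) by (metis add.commute diff_add_cancel diff_self mult_zero_left add_0)
  qed
  ultimately show ?case by blast
qed

lemma s_unital_set_common_left_unit:
  fixes I :: "'a::ring set"
  assumes su: "s_unital_set I" and I: "add_subgroup I" "\<And>x y. x \<in> I \<Longrightarrow> y \<in> I \<Longrightarrow> x * y \<in> I"
    and "finite F" "F \<subseteq> I"
  shows "\<exists>a\<in>I. \<forall>x\<in>F. a * x = x"
  using \<open>finite F\<close> \<open>F \<subseteq> I\<close>
proof (induction rule: finite_induct)
  case empty
  then show ?case using add_subgroup_zero[OF I(1)] by blast
next
  case (insert x F)
  then obtain a where a: "a \<in> I" "\<forall>y\<in>F. a * y = y" by auto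
  have "x - a * x \<in> I"
    using insert.prems a(1) I unfolding diff_conv_add_uminus
    by (blast intro: add_subgroup_add add_subgroup_neg)
  then obtain c where c: "c \<in> I" "c * (x - a * x) = x - a * x"
    using su unfolding s_unital_set_def by blast
  define d where "d = a + c - c * a"
  have "d \<in> I"
    using a(1) c(1) I unfolding d_def diff_conv_add_uminus
    by (blast intro: add_subgroup_add add_subgroup_neg)
  moreover have "d * y = y" if "y \<in> insert x F" for y
  proof -
    have "d * y = a * y + c * (y - a * y)" unfolding d_def by (simp add: algebra_simps)
    moreover have "y = x \<or> a * y = y" using that a(2) by blast
    ultimately show ?thesis using c(2) by (metis add.commute diff_add_cancel diff_self mult_zero_right add_0)
  qed
  ultimately show ?case by blast
qed

section \<open>\<open>\<int>\<close>-graded rings\<close>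

locale Z_graded =
  fixes Bi :: "int \<Rightarrow> 'b::ring set"
  assumes Z_grading: "Z_grading Bi"
begin

lemma add_subgroup_component: "add_subgroup (Bi i)"
  using conjunct1[OF Z_grading[unfolded Z_grading_def]] unfolding add_subgroup_def by blast

lemma component_mult: "x \<in> Bi i \<Longrightarrow> y \<in> Bi j \<Longrightarrow> x * y \<in> Bi (i + j)"
  using conjunct1[OF conjunct2[OF Z_grading[unfolded Z_grading_def]]] by blast

lemma homogeneous_decomposition:
  assumes "\<forall>i. c i \<in> Bi i" "finite {i. c i \<noteq> 0}" "x = Sum_any c" and "x \<in> Bi k"
  shows "c k = x"
proof -
  let ?P = "\<lambda>f. (\<forall>i. f i \<in> Bi i) \<and> finite {i. f i \<noteq> 0} \<and> x = sum f {i. f i \<noteq> 0}"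
  let ?f = "\<lambda>i. if i = k then x else 0"
  have uniq: "\<exists>!f. ?P f"
    using spec[OF conjunct2[OF conjunct2[OF Z_grading[unfolded Z_grading_def]]], of x] .
  have Pc: "?P c" using assms(1-3) by (simp add: Sum_any.expand_set)
  have Pf: "?P ?f"
  proof (intro conjI)
    show "\<forall>i. ?f i \<in> Bi i" using assms(4) add_subgroup_zero[OF add_subgroup_component] by simp
    show "finite {i. ?f i \<noteq> 0}" by (rule finite_subset[of _ "{k}"]) auto
    show "x = sum ?f {i. ?f i \<noteq> 0}" using Sum_any.expand_set[of ?f] by simp
  qed
  from uniq have "c = ?f"
  proof (rule ex1E)
    fix g assume "\<forall>h. ?P h \<longrightarrow> h = g"
    then have "c = g" "?f = g" using Pc Pf by simp_all
    then show "c = ?f" by simp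
  qed
  then show ?thesis by simp
qed

lemma component_in_addgen:
  assumes W: "\<And>i. W i \<subseteq> Bi i" and gen: "\<And>x. x \<in> addgen (\<Union>i. W i)" and x: "x \<in> Bi k"
  shows "x \<in> addgen (W k)"
proof -
  let ?D = "{x. \<exists>c. (\<forall>i. c i \<in> addgen (W i)) \<and> finite {i. c i \<noteq> 0} \<and> x = Sum_any c}"
  have "add_subgroup ?D"
  proof (rule add_subgroupI)
    show "0 \<in> ?D" by (intro CollectI exI[of _ "\<lambda>i. 0"]) (simp add: addgen.zero)
    show "x + y \<in> ?D" if x: "x \<in> ?D" and y: "y \<in> ?D" for x y
    proof -
      obtain c where c: "\<forall>i. c i \<in> addgen (W i)" "finite {i. c i \<noteq> 0}" "x = Sum_any c"
        using x by blast
      obtain d where d: "\<forall>i. d i \<in> addgen (W i)" "finite {i. d i \<noteq> 0}" "y = Sum_any d"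
        using y by blast
      have "finite {i. c i + d i \<noteq> 0}"
        using c(2) d(2) by (rule finite_subset[rotated, OF finite_UnI]) auto
      moreover have "x + y = Sum_any (\<lambda>i. c i + d i)" using c d by (simp add: Sum_any.distrib)
      ultimately show ?thesis using c(1) d(1) by (intro CollectI exI[of _ "\<lambda>i. c i + d i"]) (simp add: addgen.add)
    qed
    show "- x \<in> ?D" if x: "x \<in> ?D" for x
    proof -
      obtain c where c: "\<forall>i. c i \<in> addgen (W i)" "finite {i. c i \<noteq> 0}" "x = Sum_any c"
        using x by blast
      have "- x = Sum_any (\<lambda>i. - c i)" using c(3) by (simp add: Sum_any.expand_set sum_negf)
      then show ?thesis using c(1,2) by (intro CollectI exI[of _ "\<lambda>i. - c i"]) (simp add: addgen.neg)
    qed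
  qed
  moreover have "w \<in> ?D" if "w \<in> W j" for w j
    using that by (intro CollectI exI[of _ "\<lambda>i. if i = j then w else 0"]) (simp add: addgen.gen addgen.zero)
  ultimately have "addgen (\<Union>i. W i) \<subseteq> ?D" by (intro addgen_least) auto
  then obtain c where c: "\<forall>i. c i \<in> addgen (W i)" "finite {i. c i \<noteq> 0}" "x = Sum_any c"
    using gen by blast
  have "\<forall>i. c i \<in> Bi i" using c(1) addgen_least[OF add_subgroup_component W] by blast
  then have "c k = x" using homogeneous_decomposition c(2,3) x by blast
  then show ?thesis using c(1) by metis
qed

lemma setmul_component_mult_closed:
  assumes "a \<in> setmul (Bi (- i)) (Bi i)" "b \<in> setmul (Bi (- i)) (Bi i)"
  shows "a * b \<in> setmul (Bi (- i)) (Bi i)"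
proof (rule setmul_mult_closed[OF _ assms])
  fix y x' y' assume "y \<in> Bi i" "x' \<in> Bi (- i)" "y' \<in> Bi i"
  then have "y * x' * y' \<in> Bi (i + - i + i)" by (intro component_mult)
  then show "y * x' * y' \<in> Bi i" by simp
qed

lemma setmul_component_sandwich:
  assumes "u \<in> Bi i" "c \<in> setmul (Bi j) (Bi k)" "v \<in> Bi l"
  shows "u * c * v \<in> setmul (Bi (i + j)) (Bi (k + l))"
proof -
  have "u * (s * t) * v \<in> setmul (Bi (i + j)) (Bi (k + l))" if "s \<in> Bi j" "t \<in> Bi k" for s t
    using setmul_in[OF component_mult[OF assms(1) that(1)] component_mult[OF that(2) assms(3)]]
    by (simp add: mult.assoc)
  then have "setmul (Bi j) (Bi k) \<subseteq> (\<lambda>c. u * c * v) -` setmul (Bi (i + j)) (Bi (k + l))"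
    by (intro setmul_least add_subgroup_vimage[OF add_subgroup_setmul]) (auto simp: algebra_simps)
  then show ?thesis using assms(2) by blast
qed

lemma left_unit_extend:
  assumes X: "X \<subseteq> Bi i" and Y: "Y \<subseteq> Bi (- i)" and a: "a \<in> setmul X Y" "\<forall>x\<in>F. a * x = x"
    and units: "\<And>V. finite V \<Longrightarrow> V \<subseteq> Y \<Longrightarrow>
      \<exists>c\<in>setmul (Bi j) (Bi (- j)). \<forall>v\<in>V. \<forall>x\<in>F. c * (v * x) = v * x"
  shows "\<exists>e\<in>setmul (Bi (i + j)) (Bi (- (i + j))). \<forall>x\<in>F. e * x = x"
proof -
  let ?E = "setmul (Bi (i + j)) (Bi (- (i + j)))"
  obtain V where V: "finite V" "V \<subseteq> Y" "a \<in> setmul X V" using setmul_finite_right[OF a(1)] by blast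
  obtain c where c: "c \<in> setmul (Bi j) (Bi (- j))" "\<forall>v\<in>V. \<forall>x\<in>F. c * (v * x) = v * x"
    using units[OF V(1,2)] by blast
  let ?Z = "{z. \<exists>e\<in>?E. \<forall>x\<in>F. e * x = z * x}"
  have "add_subgroup ?Z" by (rule add_subgroup_left_mult_agree[OF add_subgroup_setmul])
  \<comment> \<open>insert \<open>c\<close> between the two factors of each product \<open>u v\<close> occurring in \<open>a\<close>\<close>
  moreover have "u * v \<in> ?Z" if "u \<in> X" "v \<in> V" for u v
  proof -
    have "u * c * v \<in> setmul (Bi (i + j)) (Bi (- j + - i))"
      using setmul_component_sandwich[OF _ c(1)] that X Y V(2) by blast
    moreover have "\<forall>x\<in>F. u * c * v * x = u * v * x" using c(2) that(2) by (simp add: mult.assoc)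
    ultimately show ?thesis by (intro CollectI bexI[of _ "u * c * v"]) (auto simp: add.commute)
  qed
  ultimately have "setmul X V \<subseteq> ?Z" by (rule setmul_least)
  then obtain e where "e \<in> ?E" "\<forall>x\<in>F. e * x = a * x" using V(3) by blast
  then show ?thesis using a(2) by auto
qed

lemma right_unit_extend:
  assumes X: "X \<subseteq> Bi i" and Y: "Y \<subseteq> Bi (- i)" and b: "b \<in> setmul X Y" "\<forall>x\<in>F. x * b = x"
    and units: "\<And>U. finite U \<Longrightarrow> U \<subseteq> X \<Longrightarrow>
      \<exists>c\<in>setmul (Bi j) (Bi (- j)). \<forall>u\<in>U. \<forall>x\<in>F. x * u * c = x * u"
  shows "\<exists>e\<in>setmul (Bi (i + j)) (Bi (- (i + j))). \<forall>x\<in>F. x * e = x"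
proof -
  let ?E = "setmul (Bi (i + j)) (Bi (- (i + j)))"
  obtain U where U: "finite U" "U \<subseteq> X" "b \<in> setmul U Y" using setmul_finite_left[OF b(1)] by blast
  obtain c where c: "c \<in> setmul (Bi j) (Bi (- j))" "\<forall>u\<in>U. \<forall>x\<in>F. x * u * c = x * u"
    using units[OF U(1,2)] by blast
  let ?Z = "{z. \<exists>e\<in>?E. \<forall>x\<in>F. x * e = x * z}"
  have "add_subgroup ?Z" by (rule add_subgroup_right_mult_agree[OF add_subgroup_setmul])
  moreover have "u * v \<in> ?Z" if "u \<in> U" "v \<in> Y" for u v
  proof -
    have "u * c * v \<in> setmul (Bi (i + j)) (Bi (- j + - i))"
      using setmul_component_sandwich[OF _ c(1)] that X Y U(2) by blast
    moreover have "\<forall>x\<in>F. x * (u * c * v) = x * (u * v)"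
      using c(2) that(1) by (metis mult.assoc)
    ultimately show ?thesis by (intro CollectI bexI[of _ "u * c * v"]) (auto simp: add.commute)
  qed
  ultimately have "setmul U Y \<subseteq> ?Z" by (rule setmul_least)
  then obtain e where "e \<in> ?E" "\<forall>x\<in>F. x * e = x * b" using U(3) by blast
  then show ?thesis using b(2) by auto
qed

lemma right_unit_from_left_unit:
  assumes x: "x \<in> Bi i" and a: "a \<in> setmul (Bi i) (Bi (- i))" "a * x = x"
    and su: "s_unital_set (setmul (Bi (- i)) (Bi i))"
  shows "\<exists>b\<in>setmul (Bi (- i)) (Bi i). x * b = x"
proof -
  obtain V where V: "finite V" "V \<subseteq> Bi (- i)" "a \<in> setmul (Bi i) V"
    using setmul_finite_right[OF a(1)] by blast
  have "finite ((\<lambda>v. v * x) ` V)" using V(1) by simp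
  moreover have "(\<lambda>v. v * x) ` V \<subseteq> setmul (Bi (- i)) (Bi i)" using V(2) x by (auto intro: setmul_in)
  ultimately obtain b where b: "b \<in> setmul (Bi (- i)) (Bi i)" "\<forall>w\<in>(\<lambda>v. v * x) ` V. w * b = w"
    using s_unital_set_common_right_unit[OF su add_subgroup_setmul setmul_component_mult_closed] by blast
  have "u * v \<in> (\<lambda>z. z * x) -` {w. w * b = w}" if "v \<in> V" for u v
    using b(2) that by (simp add: mult.assoc)
  then have "setmul (Bi i) V \<subseteq> (\<lambda>z. z * x) -` {w. w * b = w}"
    by (intro setmul_least add_subgroup_vimage[OF add_subgroup_right_fixed]) (auto simp: distrib_right)
  then have "a * x * b = a * x" using V(3) by blast
  then show ?thesis using a(2) b(1) by auto
qed

lemma left_unit_from_right_unit: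
  assumes x: "x \<in> Bi (- i)" and b: "b \<in> setmul (Bi i) (Bi (- i))" "x * b = x"
    and su: "s_unital_set (setmul (Bi (- i)) (Bi i))"
  shows "\<exists>a\<in>setmul (Bi (- i)) (Bi i). a * x = x"
proof -
  obtain U where U: "finite U" "U \<subseteq> Bi i" "b \<in> setmul U (Bi (- i))"
    using setmul_finite_left[OF b(1)] by blast
  have "finite ((\<lambda>u. x * u) ` U)" using U(1) by simp
  moreover have "(\<lambda>u. x * u) ` U \<subseteq> setmul (Bi (- i)) (Bi i)" using U(2) x by (auto intro: setmul_in)
  ultimately obtain a where a: "a \<in> setmul (Bi (- i)) (Bi i)" "\<forall>w\<in>(\<lambda>u. x * u) ` U. a * w = w"
    using s_unital_set_common_left_unit[OF su add_subgroup_setmul setmul_component_mult_closed] by blast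
  have "u * v \<in> (\<lambda>z. x * z) -` {w. a * w = w}" if "u \<in> U" for u v
  proof -
    have "a * (x * u) * v = x * u * v" using a(2) that by simp
    then show ?thesis by (simp add: mult.assoc)
  qed
  then have "setmul U (Bi (- i)) \<subseteq> (\<lambda>z. x * z) -` {w. a * w = w}"
    by (intro setmul_least add_subgroup_vimage[OF add_subgroup_left_fixed]) (auto simp: distrib_left)
  then have "a * (x * b) = x * b" using U(3) by blast
  then show ?thesis using b(2) a(1) by auto
qed

lemma nearly_epsilon_strongly_gradedI:
  assumes su: "\<And>k. 0 \<le> k \<Longrightarrow> s_unital_set (setmul (Bi (- k)) (Bi k))"
    and degree_zero: "Bi 0 \<subseteq> setmul (Bi 0) (Bi 0)"
    and positive: "\<And>k x. 0 < k \<Longrightarrow> x \<in> Bi k \<Longrightarrow> \<exists>a\<in>setmul (Bi k) (Bi (- k)). a * x = x"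
    and negative: "\<And>k x. 0 < k \<Longrightarrow> x \<in> Bi (- k) \<Longrightarrow> \<exists>b\<in>setmul (Bi k) (Bi (- k)). x * b = x"
  shows "nearly_epsilon_strongly_graded Bi"
  unfolding nearly_epsilon_strongly_graded_def
proof (rule conjI[OF Z_grading], intro allI ballI)
  fix i x assume x: "x \<in> Bi i"
  consider "i = 0" | "0 < i" | "0 < - i" by linarith
  then show "(\<exists>a\<in>setmul (Bi i) (Bi (- i)). a * x = x) \<and> (\<exists>b\<in>setmul (Bi (- i)) (Bi i). x * b = x)"
  proof cases
    case 1
    then show ?thesis using su[of 0] degree_zero x unfolding s_unital_set_def by auto
  next
    case 2
    then obtain a where "a \<in> setmul (Bi i) (Bi (- i))" "a * x = x" using positive x by blast
    then show ?thesis using right_unit_from_left_unit x su 2 by auto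
  next
    case 3
    then obtain b where b: "b \<in> setmul (Bi (- i)) (Bi i)" "x * b = x" using negative[of "- i" x] x by auto
    have "s_unital_set (setmul (Bi i) (Bi (- i)))" using su[of "- i"] 3 by simp
    then obtain a where "a \<in> setmul (Bi i) (Bi (- i))" "a * x = x"
      using left_unit_from_right_unit[of x "- i" b] x b by auto
    then show ?thesis using b by blast
  qed
qed

end

section \<open>Graded covariant representations of systems satisfying (FS)\<close>

locale FS_graded_rep =
  fixes lP :: "'r::ring \<Rightarrow> 'p::ab_group_add \<Rightarrow> 'p" and rP :: "'p \<Rightarrow> 'r \<Rightarrow> 'p"
    and lQ :: "'r \<Rightarrow> 'q::ab_group_add \<Rightarrow> 'q" and rQ :: "'q \<Rightarrow> 'r \<Rightarrow> 'q"
    and psi :: "'p \<Rightarrow> 'q \<Rightarrow> 'r"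
    and S :: "'p \<Rightarrow> 'b::ring" and T :: "'q \<Rightarrow> 'b" and sigma :: "'r \<Rightarrow> 'b"
    and Bi :: "int \<Rightarrow> 'b set"
  assumes system: "s_unital_R_system lP rP lQ rQ psi"
    and rep: "graded_cov_rep lP rP lQ rQ psi S T sigma Bi"
    and FS: "condition_FS lP rQ psi"
begin

sublocale Z_graded Bi
  by unfold_locales (use rep in \<open>simp add: graded_cov_rep_def\<close>)

lemma ring_left_unit: "\<exists>e. e * r = (r :: 'r)"
  using system unfolding s_unital_R_system_def s_unital_ring_def by blast

lemma P_left_unit: "\<exists>e. lP e p = p"
  using system unfolding s_unital_R_system_def s_unital_bimodule_def by blast

lemma Q_left_unit: "\<exists>e. lQ e q = q"
  using system unfolding s_unital_R_system_def s_unital_bimodule_def by blast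

lemma Q_right_unit: "\<exists>e. rQ q e = q"
  using system unfolding s_unital_R_system_def s_unital_bimodule_def by blast

lemma
  shows S_add: "S (p + p') = S p + S p'"
    and T_add: "T (q + q') = T q + T q'"
    and sigma_mult: "sigma (r * r') = sigma r * sigma r'"
    and S_right: "S (rP p r) = S p * sigma r"
    and S_left: "S (lP r p) = sigma r * S p"
    and T_right: "T (rQ q r) = T q * sigma r"
    and T_left: "T (lQ r q) = sigma r * T q"
    and S_mult_T: "S p * T q = sigma (psi p q)"
  using rep[unfolded graded_cov_rep_def covariant_rep_def additive_def ring_hom_nu_def] by simp_all

lemma
  shows sigma_component: "sigma r \<in> Bi 0"
    and T_component: "T q \<in> Bi 1"
    and S_component: "S p \<in> Bi (- 1)"
    and subring_generated: "subring_gen (range sigma \<union> range S \<union> range T) = UNIV"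
  using rep[unfolded graded_cov_rep_def] by blast+

abbreviation Tword :: "'q list \<Rightarrow> 'b \<Rightarrow> 'b" where
  "Tword qs y \<equiv> foldr (\<lambda>q z. T q * z) qs y"

abbreviation Sword :: "'b \<Rightarrow> 'p list \<Rightarrow> 'b" where
  "Sword y ps \<equiv> foldl (\<lambda>z p. z * S p) y ps"

text \<open>\<open>words k\<close> consists of the monomials \<open>T q\<^sub>1 \<cdots> T q\<^sub>m \<sigma>(r) S p\<^sub>1 \<cdots> S p\<^sub>n\<close> with
  \<open>m - n = k\<close>. Because \<open>S p T q = \<sigma>(\<psi>(p \<otimes> q))\<close>, products of monomials are monomials, so
  they span \<open>B\<close>, and \<open>B\<^sub>k\<close> is spanned by \<open>words k\<close>.\<close>

definition words :: "int \<Rightarrow> 'b set" where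
  "words k = {Tword qs (Sword (sigma r) ps) | qs r ps. int (length qs) - int (length ps) = k}"

lemma Sword_mult_left: "z * Sword y ps = Sword (z * y) ps"
  by (induction ps arbitrary: y) (simp_all add: mult.assoc)

lemma Tword_mult_right: "Tword qs y * z = Tword qs (y * z)"
  by (induction qs) (simp_all add: mult.assoc)

lemma Tword_Sword: "Tword qs (Sword y ps) = Sword (Tword qs y) ps"
  by (induction qs) (simp_all add: Sword_mult_left)

lemma Tword_component: "y \<in> Bi j \<Longrightarrow> Tword qs y \<in> Bi (int (length qs) + j)"
proof (induction qs)
  case (Cons q qs)
  then have "T q * Tword qs y \<in> Bi (1 + (int (length qs) + j))"
    by (intro component_mult T_component)
  then show ?case by (simp add: add.assoc)
qed simp

lemma Sword_component: "y \<in> Bi j \<Longrightarrow> Sword y ps \<in> Bi (j - int (length ps))"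
proof (induction ps arbitrary: y j)
  case (Cons p ps)
  have "y * S p \<in> Bi (j + - 1)" by (intro component_mult Cons.prems S_component)
  from Cons.IH[OF this] show ?case by (simp add: algebra_simps)
qed simp

lemma words_component: "words k \<subseteq> Bi k"
  using Tword_component[OF Sword_component[OF sigma_component]] unfolding words_def by fastforce

lemma sigma_mult_words:
  assumes "x \<in> words k"
  shows "sigma s * x \<in> words k"
proof -
  obtain qs r ps where x: "x = Tword qs (Sword (sigma r) ps)" and k: "int (length qs) - int (length ps) = k"
    using assms unfolding words_def by blast
  show ?thesis
  proof (cases qs)
    case Nil
    then have "sigma s * x = Tword [] (Sword (sigma (s * r)) ps)"
      using x by (simp add: Sword_mult_left sigma_mult)
    then show ?thesis using k Nil unfolding words_def by fastforce
  next
    case (Cons q qs')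
    then have "sigma s * x = Tword (lQ s q # qs') (Sword (sigma r) ps)"
      using x by (simp add: T_left mult.assoc)
    then show ?thesis using k Cons unfolding words_def by fastforce
  qed
qed

lemma T_mult_words:
  assumes "x \<in> words k"
  shows "T q * x \<in> words (k + 1)"
proof -
  obtain qs r ps where x: "x = Tword qs (Sword (sigma r) ps)" and k: "int (length qs) - int (length ps) = k"
    using assms unfolding words_def by blast
  then have "T q * x = Tword (q # qs) (Sword (sigma r) ps)" by simp
  then show ?thesis using k unfolding words_def by fastforce
qed

lemma S_mult_words:
  assumes "x \<in> words k"
  shows "S p * x \<in> words (k - 1)"
proof -
  obtain qs r ps where x: "x = Tword qs (Sword (sigma r) ps)" and k: "int (length qs) - int (length ps) = k"
    using assms unfolding words_def by blast
  show ?thesis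
  proof (cases qs)
    case Nil
    obtain e where e: "lP e (rP p r) = rP p r" using P_left_unit by blast
    have "S p * x = Sword (S p * sigma r) ps" using x Nil by (simp add: Sword_mult_left)
    also have "S p * sigma r = sigma e * S (rP p r)" by (metis S_left S_right e)
    finally have "S p * x = Tword [] (Sword (sigma e) (rP p r # ps))" by simp
    then show ?thesis using k Nil unfolding words_def by fastforce
  next
    case (Cons q qs')
    then have "S p * x = sigma (psi p q) * Tword qs' (Sword (sigma r) ps)"
      using x by (simp add: S_mult_T mult.assoc[symmetric])
    moreover have "Tword qs' (Sword (sigma r) ps) \<in> words (k - 1)"
      using k Cons unfolding words_def by fastforce
    ultimately show ?thesis using sigma_mult_words by simp
  qed
qed

lemma Sword_mult_words: "y \<in> words j \<Longrightarrow> Sword (sigma r) ps * y \<in> words (j - int (length ps))"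
proof (induction ps arbitrary: y j rule: rev_induct)
  case (snoc p ps)
  have "Sword (sigma r) ps * (S p * y) \<in> words (j - 1 - int (length ps))"
    using snoc.IH[OF S_mult_words[OF snoc.prems]] .
  then show ?case by (simp add: mult.assoc algebra_simps)
qed (simp add: sigma_mult_words)

lemma Tword_mult_words: "y \<in> words j \<Longrightarrow> Tword qs y \<in> words (int (length qs) + j)"
proof (induction qs)
  case (Cons q qs)
  then show ?case using T_mult_words by (fastforce simp: algebra_simps)
qed simp

lemma words_mult:
  assumes "x \<in> words i" "y \<in> words j"
  shows "x * y \<in> words (i + j)"
proof -
  obtain qs r ps where x: "x = Tword qs (Sword (sigma r) ps)" and i: "int (length qs) - int (length ps) = i"
    using assms(1) unfolding words_def by blast
  have "Tword qs (Sword (sigma r) ps * y) \<in> words (int (length qs) + (j - int (length ps)))"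
    by (intro Tword_mult_words Sword_mult_words assms(2))
  then show ?thesis using i unfolding x Tword_mult_right by (simp add: algebra_simps)
qed

lemma generators_in_words: "range sigma \<union> range S \<union> range T \<subseteq> (\<Union>k. words k)"
proof -
  have "sigma r \<in> words 0" for r
    unfolding words_def by (intro CollectI exI[of _ "[]"] exI[of _ r]) simp
  moreover have "S p \<in> words (- 1)" for p
  proof -
    obtain e where "lP e p = p" using P_left_unit by blast
    then have "S p = Tword [] (Sword (sigma e) [p])" using S_left[of e p] by simp
    then show ?thesis unfolding words_def by fastforce
  qed
  moreover have "T q \<in> words 1" for q
  proof -
    obtain e where "rQ q e = q" using Q_right_unit by blast
    then have "T q = Tword [q] (Sword (sigma e) [])" using T_right[of q e] by simp
    then show ?thesis unfolding words_def by fastforce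
  qed
  ultimately show ?thesis by blast
qed

lemma component_in_addgen_words: "x \<in> Bi k \<Longrightarrow> x \<in> addgen (words k)"
proof (rule component_in_addgen[OF words_component])
  have "x * y \<in> (\<Union>k. words k)" if "x \<in> (\<Union>k. words k)" "y \<in> (\<Union>k. words k)" for x y
    using that words_mult by blast
  then have "subring_gen (range sigma \<union> range S \<union> range T) \<subseteq> addgen (\<Union>k. words k)"
    by (rule subring_gen_subset_addgen[OF generators_in_words])
  then show "y \<in> addgen (\<Union>k. words k)" for y using subring_generated by blast
qed

definition T_words :: "nat \<Rightarrow> 'b set" where
  "T_words n = {Tword qs y | qs y. length qs = n}"

definition S_words :: "nat \<Rightarrow> 'b set" where
  "S_words n = {Sword y ps | y ps. length ps = n}"

lemma words_positive: "words (int n) \<subseteq> T_words n"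
proof
  fix x assume "x \<in> words (int n)"
  then obtain qs r ps where x: "x = Tword qs (Sword (sigma r) ps)"
    and n: "int (length qs) - int (length ps) = int n"
    unfolding words_def by blast
  have "x = Tword (take n qs) (Tword (drop n qs) (Sword (sigma r) ps))"
    unfolding x by (metis append_take_drop_id foldr_append comp_apply)
  moreover have "length (take n qs) = n" using n by simp
  ultimately show "x \<in> T_words n" unfolding T_words_def by blast
qed

lemma words_negative: "words (- int n) \<subseteq> S_words n"
proof
  fix x assume "x \<in> words (- int n)"
  then obtain qs r ps where x: "x = Tword qs (Sword (sigma r) ps)"
    and n: "int (length qs) - int (length ps) = - int n"
    unfolding words_def by blast
  let ?m = "length ps - n"
  have "x = Sword (Sword (Tword qs (sigma r)) (take ?m ps)) (drop ?m ps)"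
    unfolding x Tword_Sword by (metis append_take_drop_id foldl_append)
  moreover have "length (drop ?m ps) = n" using n by simp
  ultimately show "x \<in> S_words n" unfolding S_words_def by blast
qed

lemma T_words_Suc_iff: "x \<in> T_words (Suc n) \<longleftrightarrow> (\<exists>q y. x = T q * y \<and> y \<in> T_words n)"
proof
  assume "x \<in> T_words (Suc n)"
  then obtain q qs y where "x = Tword (q # qs) y" "length qs = n"
    unfolding T_words_def by (auto simp: length_Suc_conv)
  then show "\<exists>q y. x = T q * y \<and> y \<in> T_words n" unfolding T_words_def by auto
next
  assume "\<exists>q y. x = T q * y \<and> y \<in> T_words n"
  then obtain q qs y where "x = Tword (q # qs) y" "length qs = n" unfolding T_words_def by auto
  then show "x \<in> T_words (Suc n)" unfolding T_words_def by fastforce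
qed

lemma S_words_Suc_iff: "x \<in> S_words (Suc n) \<longleftrightarrow> (\<exists>y p. x = y * S p \<and> y \<in> S_words n)"
proof
  assume "x \<in> S_words (Suc n)"
  then obtain y ps p where "x = Sword y (ps @ [p])" "length ps = n"
    unfolding S_words_def by (auto simp: length_Suc_conv_rev)
  then show "\<exists>y p. x = y * S p \<and> y \<in> S_words n" unfolding S_words_def by auto
next
  assume "\<exists>y p. x = y * S p \<and> y \<in> S_words n"
  then obtain y ps p where "x = Sword y (ps @ [p])" "length ps = n" unfolding S_words_def by auto
  then show "x \<in> S_words (Suc n)" unfolding S_words_def by fastforce
qed

lemma S_mult_T_words:
  assumes "x \<in> T_words (Suc (Suc n))"
  shows "S p * x \<in> T_words (Suc n)"
proof -
  obtain q q' y where x: "x = T q * (T q' * y)" and y: "y \<in> T_words n"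
    using assms unfolding T_words_Suc_iff by blast
  \<comment> \<open>\<open>S p T q = \<sigma>(\<psi>(p \<otimes> q))\<close> is absorbed into the next factor \<open>T q'\<close>\<close>
  have "S p * x = T (lQ (psi p q) q') * y"
    unfolding x by (simp add: mult.assoc[symmetric] S_mult_T T_left)
  then show ?thesis using y unfolding T_words_Suc_iff by blast
qed

lemma S_words_mult_T:
  assumes "x \<in> S_words (Suc (Suc n))"
  shows "x * T q \<in> S_words (Suc n)"
proof -
  obtain y p' p where x: "x = y * S p' * S p" and y: "y \<in> S_words n"
    using assms unfolding S_words_Suc_iff by blast
  have "x * T q = y * S (rP p' (psi p q))"
    unfolding x by (simp add: mult.assoc S_mult_T S_right)
  then show ?thesis using y unfolding S_words_Suc_iff by blast
qed

lemma F_P_Q_left_mult: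
  assumes "\<Theta> \<in> F_P_Q rQ psi"
  shows "\<exists>a\<in>setmul (range T) (range S). \<forall>x. T (\<Theta> x) = a * T x"
  using assms unfolding F_P_Q_def
proof induction
  case (gen f)
  then obtain q p where f: "f = (\<lambda>x. rQ q (psi p x))" by blast
  have "\<forall>x. T (f x) = T q * S p * T x" unfolding f by (simp add: T_right S_mult_T mult.assoc)
  then show ?case using setmul_in[of "T q" "range T" "S p" "range S"] by blast
next
  case zero
  then show ?case using add_subgroup_zero[OF add_subgroup_setmul] additive_zero_neg(1)[OF T_add] by force
next
  case (add f g)
  then obtain a b where "a \<in> setmul (range T) (range S)" "\<forall>x. T (f x) = a * T x"
    "b \<in> setmul (range T) (range S)" "\<forall>x. T (g x) = b * T x" by blast
  then show ?case
    by (intro bexI[of _ "a + b"]) (auto simp: T_add distrib_right add_subgroup_add[OF add_subgroup_setmul])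
next
  case (neg f)
  then obtain a where "a \<in> setmul (range T) (range S)" "\<forall>x. T (f x) = a * T x" by blast
  then show ?case
    by (intro bexI[of _ "- a"]) (auto simp: additive_zero_neg(2)[OF T_add] add_subgroup_neg[OF add_subgroup_setmul])
qed

lemma F_Q_P_right_mult:
  assumes "\<Phi> \<in> F_Q_P lP psi"
  shows "\<exists>b\<in>setmul (range T) (range S). \<forall>y. S (\<Phi> y) = S y * b"
  using assms unfolding F_Q_P_def
proof induction
  case (gen f)
  then obtain p q where f: "f = (\<lambda>y. lP (psi y q) p)" by blast
  have "\<forall>y. S (f y) = S y * (T q * S p)" unfolding f by (simp add: S_left S_mult_T mult.assoc[symmetric])
  then show ?case using setmul_in[of "T q" "range T" "S p" "range S"] by blast
next
  case zero
  then show ?case using add_subgroup_zero[OF add_subgroup_setmul] additive_zero_neg(1)[OF S_add] by force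
next
  case (add f g)
  then obtain a b where "a \<in> setmul (range T) (range S)" "\<forall>y. S (f y) = S y * a"
    "b \<in> setmul (range T) (range S)" "\<forall>y. S (g y) = S y * b" by blast
  then show ?case
    by (intro bexI[of _ "a + b"]) (auto simp: S_add distrib_left add_subgroup_add[OF add_subgroup_setmul])
next
  case (neg f)
  then obtain a where "a \<in> setmul (range T) (range S)" "\<forall>y. S (f y) = S y * a" by blast
  then show ?case
    by (intro bexI[of _ "- a"]) (auto simp: additive_zero_neg(2)[OF S_add] add_subgroup_neg[OF add_subgroup_setmul])
qed

lemma T_words_FS_left_unit:
  assumes "finite F" "F \<subseteq> T_words (Suc n)"
  shows "\<exists>a\<in>setmul (range T) (range S). \<forall>x\<in>F. a * x = x"
proof -
  have "\<forall>x\<in>F. \<exists>q y. x = T q * y" using assms(2) T_words_Suc_iff by blast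
  then obtain g h where gh: "\<forall>x\<in>F. x = T (g x) * h x" by metis
  obtain \<Theta> where "\<Theta> \<in> F_P_Q rQ psi" "\<forall>x\<in>F. \<Theta> (g x) = g x"
    using FS assms(1) unfolding condition_FS_def by (metis finite.emptyI finite_imageI image_eqI)
  moreover obtain a where "a \<in> setmul (range T) (range S)" "\<forall>q. T (\<Theta> q) = a * T q"
    using F_P_Q_left_mult calculation(1) by blast
  ultimately show ?thesis using gh by (metis mult.assoc)
qed

lemma S_words_FS_right_unit:
  assumes "finite F" "F \<subseteq> S_words (Suc n)"
  shows "\<exists>b\<in>setmul (range T) (range S). \<forall>x\<in>F. x * b = x"
proof -
  have "\<forall>x\<in>F. \<exists>y p. x = y * S p" using assms(2) S_words_Suc_iff by blast
  then obtain g h where gh: "\<forall>x\<in>F. x = g x * S (h x)" by metis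
  obtain \<Phi> where "\<Phi> \<in> F_Q_P lP psi" "\<forall>x\<in>F. \<Phi> (h x) = h x"
    using FS assms(1) unfolding condition_FS_def by (metis finite.emptyI finite_imageI image_eqI)
  moreover obtain b where "b \<in> setmul (range T) (range S)" "\<forall>p. S (\<Phi> p) = S p * b"
    using F_Q_P_right_mult calculation(1) by blast
  ultimately show ?thesis using gh by (metis mult.assoc)
qed

lemma T_words_left_unit:
  "finite F \<Longrightarrow> F \<subseteq> T_words (Suc n) \<Longrightarrow>
    \<exists>a\<in>setmul (Bi (int (Suc n))) (Bi (- int (Suc n))). \<forall>x\<in>F. a * x = x"
proof (induction n arbitrary: F)
  case 0
  have "setmul (range T) (range S) \<subseteq> setmul (Bi 1) (Bi (- 1))"
    by (intro setmul_mono) (auto intro: T_component S_component)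
  then show ?case using T_words_FS_left_unit[OF 0] by auto
next
  case (Suc m)
  obtain a where a: "a \<in> setmul (range T) (range S)" "\<forall>x\<in>F. a * x = x"
    using T_words_FS_left_unit[OF Suc.prems] by blast
  have "\<exists>e\<in>setmul (Bi (1 + int (Suc m))) (Bi (- (1 + int (Suc m)))). \<forall>x\<in>F. e * x = x"
  proof (rule left_unit_extend[OF _ _ a])
    show "range T \<subseteq> Bi 1" "range S \<subseteq> Bi (- 1)" by (auto intro: T_component S_component)
    fix V assume V: "finite V" "V \<subseteq> range S"
    let ?W = "(\<lambda>(v, x). v * x) ` (V \<times> F)"
    have "finite ?W" using V(1) Suc.prems(1) by simp
    moreover have "?W \<subseteq> T_words (Suc m)"
    proof
      fix w assume "w \<in> ?W"
      then obtain v x where w: "w = v * x" "v \<in> V" "x \<in> F" by auto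
      then obtain p where "v = S p" using V(2) by blast
      then show "w \<in> T_words (Suc m)" using w Suc.prems(2) S_mult_T_words by auto
    qed
    ultimately obtain c where "c \<in> setmul (Bi (int (Suc m))) (Bi (- int (Suc m)))" "\<forall>w\<in>?W. c * w = w"
      using Suc.IH by blast
    then show "\<exists>c\<in>setmul (Bi (int (Suc m))) (Bi (- int (Suc m))). \<forall>v\<in>V. \<forall>x\<in>F. c * (v * x) = v * x"
      by auto
  qed
  then show ?case by simp
qed

lemma S_words_right_unit:
  "finite F \<Longrightarrow> F \<subseteq> S_words (Suc n) \<Longrightarrow>
    \<exists>b\<in>setmul (Bi (int (Suc n))) (Bi (- int (Suc n))). \<forall>x\<in>F. x * b = x"
proof (induction n arbitrary: F)
  case 0
  have "setmul (range T) (range S) \<subseteq> setmul (Bi 1) (Bi (- 1))"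
    by (intro setmul_mono) (auto intro: T_component S_component)
  then show ?case using S_words_FS_right_unit[OF 0] by auto
next
  case (Suc m)
  obtain b where b: "b \<in> setmul (range T) (range S)" "\<forall>x\<in>F. x * b = x"
    using S_words_FS_right_unit[OF Suc.prems] by blast
  have "\<exists>e\<in>setmul (Bi (1 + int (Suc m))) (Bi (- (1 + int (Suc m)))). \<forall>x\<in>F. x * e = x"
  proof (rule right_unit_extend[OF _ _ b])
    show "range T \<subseteq> Bi 1" "range S \<subseteq> Bi (- 1)" by (auto intro: T_component S_component)
    fix U assume U: "finite U" "U \<subseteq> range T"
    let ?W = "(\<lambda>(u, x). x * u) ` (U \<times> F)"
    have "finite ?W" using U(1) Suc.prems(1) by simp
    moreover have "?W \<subseteq> S_words (Suc m)"
    proof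
      fix w assume "w \<in> ?W"
      then obtain u x where w: "w = x * u" "u \<in> U" "x \<in> F" by auto
      then obtain q where "u = T q" using U(2) by blast
      then show "w \<in> S_words (Suc m)" using w Suc.prems(2) S_words_mult_T by auto
    qed
    ultimately obtain c where "c \<in> setmul (Bi (int (Suc m))) (Bi (- int (Suc m)))" "\<forall>w\<in>?W. w * c = w"
      using Suc.IH by blast
    then show "\<exists>c\<in>setmul (Bi (int (Suc m))) (Bi (- int (Suc m))). \<forall>u\<in>U. \<forall>x\<in>F. x * u * c = x * u"
      by auto
  qed
  then show ?case by simp
qed

lemma positive_component_left_unit:
  assumes "0 < k" "x \<in> Bi k"
  shows "\<exists>a\<in>setmul (Bi k) (Bi (- k)). a * x = x"
proof -
  define n where "n = nat k - 1"
  have k: "k = int (Suc n)" using assms(1) unfolding n_def by simp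
  obtain F where F: "finite F" "F \<subseteq> words k" "x \<in> addgen F"
    using addgen_finite_support[OF component_in_addgen_words[OF assms(2)]] by blast
  then have "F \<subseteq> T_words (Suc n)" using words_positive k by blast
  then obtain a where a: "a \<in> setmul (Bi k) (Bi (- k))" "\<forall>y\<in>F. a * y = y"
    using T_words_left_unit[OF F(1)] k by blast
  then have "addgen F \<subseteq> {y. a * y = y}" by (intro addgen_least add_subgroup_left_fixed) auto
  then show ?thesis using a(1) F(3) by blast
qed

lemma negative_component_right_unit:
  assumes "0 < k" "x \<in> Bi (- k)"
  shows "\<exists>b\<in>setmul (Bi k) (Bi (- k)). x * b = x"
proof -
  define n where "n = nat k - 1"
  have k: "k = int (Suc n)" using assms(1) unfolding n_def by simp
  obtain F where F: "finite F" "F \<subseteq> words (- k)" "x \<in> addgen F"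
    using addgen_finite_support[OF component_in_addgen_words[OF assms(2)]] by blast
  then have "F \<subseteq> S_words (Suc n)" using words_negative k by blast
  then obtain b where b: "b \<in> setmul (Bi k) (Bi (- k))" "\<forall>y\<in>F. y * b = y"
    using S_words_right_unit[OF F(1)] k by blast
  then have "addgen F \<subseteq> {y. y * b = y}" by (intro addgen_least add_subgroup_right_fixed) auto
  then show ?thesis using b(1) F(3) by blast
qed

lemma component_zero_idempotent: "Bi 0 \<subseteq> setmul (Bi 0) (Bi 0)"
proof -
  have "words 0 \<subseteq> setmul (Bi 0) (Bi 0)"
  proof
    fix w assume w: "w \<in> words 0"
    then obtain qs r ps where w_def: "w = Tword qs (Sword (sigma r) ps)"
      and len: "length qs = length ps"
      unfolding words_def by auto
    have "\<exists>e. sigma e * w = w"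
    proof (cases qs)
      case Nil
      then have "w = sigma r" using w_def len by simp
      moreover obtain e where "e * r = r" using ring_left_unit by blast
      ultimately show ?thesis by (metis sigma_mult)
    next
      case (Cons q qs')
      obtain e where "lQ e q = q" using Q_left_unit by blast
      then have "sigma e * w = w" using w_def Cons by (simp add: mult.assoc[symmetric] T_left[symmetric])
      then show ?thesis by blast
    qed
    then show "w \<in> setmul (Bi 0) (Bi 0)"
      using setmul_in[OF sigma_component] w words_component by (metis subsetD)
  qed
  then show ?thesis
    using component_in_addgen_words addgen_least[OF add_subgroup_setmul] by blast
qed

end

theorem mainTheorem8:
  fixes lP :: "'r::ring \<Rightarrow> 'p::ab_group_add \<Rightarrow> 'p" and rP :: "'p \<Rightarrow> 'r \<Rightarrow> 'p"
    and lQ :: "'r \<Rightarrow> 'q::ab_group_add \<Rightarrow> 'q" and rQ :: "'q \<Rightarrow> 'r \<Rightarrow> 'q"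
    and psi :: "'p \<Rightarrow> 'q \<Rightarrow> 'r"
    and S :: "'p \<Rightarrow> 'b::ring" and T :: "'q \<Rightarrow> 'b" and sigma :: "'r \<Rightarrow> 'b"
    and Bi :: "int \<Rightarrow> 'b set"
  assumes "s_unital_ring TYPE('r)"
    and "s_unital_R_system lP rP lQ rQ psi"
    and "semi_full lP rP lQ rQ psi S T sigma Bi"
    and "condition_FS lP rQ psi"
    and "\<forall>k. s_unital_set (I_k Bi sigma rP psi k)"
  shows "nearly_epsilon_strongly_graded Bi"
proof -
  \<comment> \<open>the first hypothesis is part of \<open>s_unital_R_system\<close>\<close>
  have "FS_graded_rep lP rP lQ rQ psi S T sigma Bi"
    using assms(2-4) unfolding FS_graded_rep_def semi_full_def by blast
  then interpret FS_graded_rep lP rP lQ rQ psi S T sigma Bi .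
  have "s_unital_set (setmul (Bi (- k)) (Bi k))" if "0 \<le> k" for k
  proof -
    define n where "n = nat k"
    have n: "k = int n" using that unfolding n_def by simp
    have "setmul (Bi (- int n)) (Bi (int n)) = I_k Bi sigma rP psi n"
      using assms(3) unfolding semi_full_def by blast
    then show ?thesis using assms(5) n by simp
  qed
  then show ?thesis
    using component_zero_idempotent positive_component_left_unit negative_component_right_unit
    by (rule nearly_epsilon_strongly_gradedI)
qed

end
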